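(* Let $\mathsf k$ be a field, $t>2$, and $Y$ a $t$-connected ladder with lower outside corners $S_w=(a_{w-1},b_w)$, $w=1,\dots,h+1$, and let $\mathfrak X=X_{S_1}\cdots X_{S_{h+1}}$. Let $\psi,\chi\colon\mathsf k[Y]_{\mathfrak X}\to\mathsf k[Y]_{\mathfrak X}$ be the $\mathsf k$-algebra homomorphisms defined on variables $X_{ij}\in Y$ by $$\psi(X_{ij})=X_{ij}+\sum_{\substack{r\ge1\\ u_1<\cdots<u_r\in U(i,j)}}\frac{X_{a_{u_1-1},j}X_{a_{u_2-1},b_{u_1}}\cdots X_{a_{u_r-1},b_{u_{r-1}}}X_{i,b_{u_r}}}{X_{S_{u_1}}X_{S_{u_2}}\cdots X_{S_{u_r}}},$$ $$\chi(X_{ij})=X_{ij}+\sum_{\substack{r\ge1\\ u_1<\cdots<u_r\in U(i,j)}}(-1)^r\frac{X_{a_{u_1-1},j}X_{a_{u_2-1},b_{u_1}}\cdots X_{a_{u_r-1},b_{u_{r-1}}}X_{i,b_{u_r}}}{X_{S_{u_1}}X_{S_{u_2}}\cdots X_{S_{u_r}}},$$ where $U(i,j)=\{w\in\mathbb N\mid i>a_{w-1}\text{ and }j>b_w\}$. Then $\psi$ and $\chi$ are mutually inverse automorphisms of $\mathsf k[Y]_{\mathfrak X}$.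
   Context: Let $X=(X_{ij})$ be an $m\times n$ matrix of indeterminates; identify $X_{pq}$ with $(p,q)$. A ladder is a subset $Y$ of the entries of $X$ such that whenever $X_{ij},X_{pq}\in Y$ with $i\le p$, $j\le q$, also $X_{iq},X_{pj}\in Y$; $X$ is the smallest matrix containing $Y$ and every row and column of $X$ meets $Y$. A subladder is a subset of $Y$ that is itself a ladder. A $t$-minor of $Y$ is a $t\times t$ minor of $X$ with all entries in $Y$. $Y$ is $t$-disconnected if there are nonempty subladders $Y',Y''$ with $Y=Y'\sqcup Y''$ and every $t$-minor of $Y$ in $Y'$ or $Y''$; otherwise $t$-connected. A lower outside corner of $Y$ is a point $(p,q)\in Y$ with $(p-1,q)\notin Y$ and $(p,q-1)\notin Y$; these are listed as $S_1,\dots,S_{h+1}$ in order of increasing row index (so decreasing column index) and written $S_w=(a_{w-1},b_w)$; $X_{S_w}$ is the variable at $S_w$. $\mathsf k[Y]$ is the polynomial ring in the variables of $Y$; all variables appearing in the formulas for $\psi,\chi$ lie in $Y$, and $\psi(X_{S_w})=\chi(X_{S_w})=X_{S_w}$ since $U(S_w)=\varnothing$. *)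

theory Defs
  imports Main "HOL-Library.Poly_Mapping"
begin

text \<open>Entries of the m x n matrix X are pairs (p,q) with 1 <= p <= m, 1 <= q <= n.\<close>

definition ladder_closed :: "(nat \<times> nat) set \<Rightarrow> bool" where
  "ladder_closed Y \<longleftrightarrow>
     (\<forall>i j p q. (i,j) \<in> Y \<longrightarrow> (p,q) \<in> Y \<longrightarrow> i \<le> p \<longrightarrow> j \<le> q \<longrightarrow> (i,q) \<in> Y \<and> (p,j) \<in> Y)"

text \<open>Y is a ladder whose smallest containing matrix is the m x n matrix X.\<close>
definition is_ladder :: "nat \<Rightarrow> nat \<Rightarrow> (nat \<times> nat) set \<Rightarrow> bool" where
  "is_ladder m n Y \<longleftrightarrow> ladder_closed Y \<and> Y \<subseteq> {1..m} \<times> {1..n}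
     \<and> (\<forall>p\<in>{1..m}. \<exists>q. (p,q) \<in> Y) \<and> (\<forall>q\<in>{1..n}. \<exists>p. (p,q) \<in> Y)"

definition subladder :: "(nat \<times> nat) set \<Rightarrow> (nat \<times> nat) set \<Rightarrow> bool" where
  "subladder Y' Y \<longleftrightarrow> Y' \<subseteq> Y \<and> ladder_closed Y'"

definition t_minor :: "nat \<Rightarrow> (nat \<times> nat) set \<Rightarrow> nat set \<Rightarrow> nat set \<Rightarrow> bool" where
  "t_minor t Y R C \<longleftrightarrow> finite R \<and> finite C \<and> card R = t \<and> card C = t \<and> R \<times> C \<subseteq> Y"

definition t_disconnected :: "nat \<Rightarrow> (nat \<times> nat) set \<Rightarrow> bool" where
  "t_disconnected t Y \<longleftrightarrow>
     (\<exists>Y' Y''. subladder Y' Y \<and> subladder Y'' Y \<and> Y' \<noteq> {} \<and> Y'' \<noteq> {}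
        \<and> Y = Y' \<union> Y'' \<and> Y' \<inter> Y'' = {}
        \<and> (\<forall>R C. t_minor t Y R C \<longrightarrow> R \<times> C \<subseteq> Y' \<or> R \<times> C \<subseteq> Y''))"

definition t_connected :: "nat \<Rightarrow> (nat \<times> nat) set \<Rightarrow> bool" where
  "t_connected t Y \<longleftrightarrow> \<not> t_disconnected t Y"

definition lower_outside_corners :: "(nat \<times> nat) set \<Rightarrow> (nat \<times> nat) set" where
  "lower_outside_corners Y = {(p,q) \<in> Y. (p - 1, q) \<notin> Y \<and> (p, q - 1) \<notin> Y}"

text \<open>We work inside the Laurent polynomial ring in the variables X_(p,q)
  (exponent vectors are finitely supported integer functions); k[Y]_\<XX> is the
  subring of Laurent polynomials involving only variables of Y, where only the
  corner variables X_(S_w) may appear with negative exponents.\<close>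

type_synonym 'k laurent = "((nat \<times> nat) \<Rightarrow>\<^sub>0 int) \<Rightarrow>\<^sub>0 'k"

definition Var :: "nat \<times> nat \<Rightarrow> 'k::comm_ring_1 laurent" where
  "Var v = Poly_Mapping.single (Poly_Mapping.single v 1) 1"

definition VarInv :: "nat \<times> nat \<Rightarrow> 'k::comm_ring_1 laurent" where
  "VarInv v = Poly_Mapping.single (Poly_Mapping.single v (-1)) 1"

definition const :: "'k \<Rightarrow> 'k::comm_ring_1 laurent" where
  "const c = Poly_Mapping.single 0 c"

definition loc_ring :: "(nat \<times> nat) set \<Rightarrow> (nat \<times> nat) set \<Rightarrow> 'k::comm_ring_1 laurent set" where
  "loc_ring Y Cs = {p :: 'k laurent. \<forall>e \<in> Poly_Mapping.keys p. (\<forall>v \<in> Poly_Mapping.keys e. v \<in> Y) \<and> (\<forall>v. Poly_Mapping.lookup e v < 0 \<longrightarrow> v \<in> Cs)}"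

text \<open>The k-algebra endomorphism of k[Y]_\<XX> sending X_v to f v, for f fixing the
  (inverted) corner variables: negative powers of X_v are sent to negative powers of X_v.\<close>
definition subst :: "(nat \<times> nat \<Rightarrow> 'k::comm_ring_1 laurent) \<Rightarrow> 'k laurent \<Rightarrow> 'k laurent" where
  "subst f p = (\<Sum>e \<in> Poly_Mapping.keys p. const (Poly_Mapping.lookup p e) *
      (\<Prod>v \<in> Poly_Mapping.keys e. if Poly_Mapping.lookup e v \<ge> 0 then f v ^ nat (Poly_Mapping.lookup e v)
                      else VarInv v ^ nat (- Poly_Mapping.lookup e v)))"

definition is_k_alg_hom_on :: "'k::comm_ring_1 laurent set \<Rightarrow> ('k laurent \<Rightarrow> 'k laurent) \<Rightarrow> bool" where
  "is_k_alg_hom_on A g \<longleftrightarrow> g 1 = 1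
     \<and> (\<forall>x\<in>A. \<forall>y\<in>A. g (x + y) = g x + g y \<and> g (x * y) = g x * g y)
     \<and> (\<forall>c. \<forall>x\<in>A. g (const c * x) = const c * g x)"

text \<open>Corners S_w = (a_(w-1), b_w), w = 1..h+1, so a_(w-1) = fst (S w), b_w = snd (S w).
  For u_1 < ... < u_r, the term
  X_(a_(u1-1), j) X_(a_(u2-1), b_u1) ... X_(a_(ur-1), b_(u(r-1))) X_(i, b_ur) / (X_S_u1 ... X_S_ur)
  is chain_term S i j [u_1,...,u_r].\<close>
fun chain_term :: "(nat \<Rightarrow> nat \<times> nat) \<Rightarrow> nat \<Rightarrow> nat \<Rightarrow> nat list \<Rightarrow> 'k::comm_ring_1 laurent" where
  "chain_term S i c [] = Var (i, c)"
| "chain_term S i c (u # us) = Var (fst (S u), c) * VarInv (S u) * chain_term S i (snd (S u)) us"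

definition U_set :: "(nat \<Rightarrow> nat \<times> nat) \<Rightarrow> nat \<Rightarrow> nat \<Rightarrow> nat \<Rightarrow> nat set" where
  "U_set S h i j = {w \<in> {1..h+1}. i > fst (S w) \<and> j > snd (S w)}"

definition img :: "'k::comm_ring_1 \<Rightarrow> (nat \<Rightarrow> nat \<times> nat) \<Rightarrow> nat \<Rightarrow> nat \<times> nat \<Rightarrow> 'k laurent" where
  "img sg S h v = (case v of (i, j) \<Rightarrow>
     Var (i, j) + (\<Sum>A \<in> Pow (U_set S h i j) - {{}}.
        const (sg ^ card A) * chain_term S i j (sorted_list_of_set A)))"

definition psi :: "(nat \<Rightarrow> nat \<times> nat) \<Rightarrow> nat \<Rightarrow> 'k::comm_ring_1 laurent \<Rightarrow> 'k laurent" where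
  "psi S h = subst (img 1 S h)"

definition chi :: "(nat \<Rightarrow> nat \<times> nat) \<Rightarrow> nat \<Rightarrow> 'k::comm_ring_1 laurent \<Rightarrow> 'k laurent" where
  "chi S h = subst (img (-1) S h)"

end

theory Submission
  imports Defs
begin

text \<open>
  Both maps are substitutions X_v \<mapsto> img s v, with s = 1 for \<psi> and s = -1 for \<chi>. Because
  the corners strictly increase in row and decrease in column, U(S_w) is empty, so both
  substitutions fix the corner variables, the only inverted ones; this is what makes them
  multiplicative on Laurent monomials. Composing substitutions amounts to substituting the images,
  so it suffices that img (-s) inverts img s on every variable. Splitting the chains
  u_1 < ... < u_r in the definition of img s (i, j) at their last resp. first element gives
    img s (i, j) = X_ij + \<Sum>_u s \<cdot> img s (a_(u-1), j) \<cdot> X_(i, b_u) / X_(S_u)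
                 = X_ij + \<Sum>_u s \<cdot> X_(a_(u-1), j) \<cdot> img s (i, b_u) / X_(S_u).
  Substituting img (-s) into the first form and inducting on the row index (a_(u-1) < i) yields
  the second form for -s plus the same sum with coefficient s, and the two sums cancel.
\<close>

section \<open>Laurent polynomials\<close>

lemma poly_mapping_sum_single_lookup:
  "(\<Sum>e\<in>Poly_Mapping.keys p. Poly_Mapping.single e (Poly_Mapping.lookup p e)) = p"
proof -
  have "finite K \<Longrightarrow> Poly_Mapping.lookup (\<Sum>e\<in>K. Poly_Mapping.single e (Poly_Mapping.lookup p e)) x
      = (if x \<in> K then Poly_Mapping.lookup p x else 0)" for K x
    by (induction K rule: finite_induct) (auto simp: lookup_single lookup_add lookup_sum when_def)
  then show ?thesis
    by (intro poly_mapping_eqI) (simp add: in_keys_iff)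
qed

lemma const_0 [simp]: "const 0 = 0"
  by (simp add: const_def)

lemma const_1 [simp]: "const 1 = 1"
  by (simp add: const_def)

lemma const_add: "const (a + b) = const a + const b"
  by (simp add: const_def single_add)

lemma const_mult: "const (a * b) = const a * const b"
  by (simp add: const_def mult_single)

lemma prod_single_one:
  "(\<Prod>v\<in>K. Poly_Mapping.single (h v) (1::'k::comm_ring_1)) = Poly_Mapping.single (\<Sum>v\<in>K. h v) 1"
  by (induction K rule: infinite_finite_induct) (simp_all add: mult_single)

lemma Var_power: "Var v ^ n = Poly_Mapping.single (Poly_Mapping.single v (int n)) 1"
  by (induction n) (simp_all add: Var_def mult_single single_add[symmetric] add.commute)

lemma VarInv_power: "VarInv v ^ n = Poly_Mapping.single (Poly_Mapping.single v (- int n)) 1"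
  by (induction n) (simp_all add: VarInv_def mult_single single_add[symmetric] add.commute)

section \<open>The localized ring\<close>

definition loc_exponents ::
    "(nat \<times> nat) set \<Rightarrow> (nat \<times> nat) set \<Rightarrow> ((nat \<times> nat) \<Rightarrow>\<^sub>0 int) set" where
  "loc_exponents Y Cs =
    {e. Poly_Mapping.keys e \<subseteq> Y \<and> (\<forall>v. Poly_Mapping.lookup e v < 0 \<longrightarrow> v \<in> Cs)}"

lemma loc_ring_iff_keys: "p \<in> loc_ring Y Cs \<longleftrightarrow> Poly_Mapping.keys p \<subseteq> loc_exponents Y Cs"
  by (auto simp: loc_ring_def loc_exponents_def)

lemma loc_exponentsD:
  assumes "e \<in> loc_exponents Y Cs"
  shows "v \<in> Poly_Mapping.keys e \<Longrightarrow> v \<in> Y" and "Poly_Mapping.lookup e v < 0 \<Longrightarrow> v \<in> Cs"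
  using assms unfolding loc_exponents_def by blast+

lemma loc_exponents_add:
  assumes "a \<in> loc_exponents Y Cs" and "b \<in> loc_exponents Y Cs"
  shows "a + b \<in> loc_exponents Y Cs"
proof -
  have "Poly_Mapping.lookup a v < 0 \<or> Poly_Mapping.lookup b v < 0"
    if "Poly_Mapping.lookup (a + b) v < 0" for v
    using that by (auto simp: lookup_add)
  with assms keys_add[of a b] show ?thesis
    unfolding loc_exponents_def by blast
qed

lemma loc_ring_add: "p \<in> loc_ring Y Cs \<Longrightarrow> q \<in> loc_ring Y Cs \<Longrightarrow> p + q \<in> loc_ring Y Cs"
  using keys_add[of p q] by (auto simp: loc_ring_iff_keys)

lemma loc_ring_mult: "p \<in> loc_ring Y Cs \<Longrightarrow> q \<in> loc_ring Y Cs \<Longrightarrow> p * q \<in> loc_ring Y Cs"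
  using keys_mult[of p q] by (auto simp: loc_ring_iff_keys intro!: loc_exponents_add)

lemma loc_ring_zero: "0 \<in> loc_ring Y Cs"
  by (simp add: loc_ring_def)

lemma loc_ring_const: "const c \<in> loc_ring Y Cs"
  by (simp add: loc_ring_iff_keys const_def loc_exponents_def)

lemma loc_ring_one: "1 \<in> loc_ring Y Cs"
  using loc_ring_const[of 1] by simp

lemma loc_ring_Var: "v \<in> Y \<Longrightarrow> Var v \<in> loc_ring Y Cs"
  by (simp add: loc_ring_iff_keys Var_def loc_exponents_def lookup_single when_def)

lemma loc_ring_VarInv: "v \<in> Y \<Longrightarrow> v \<in> Cs \<Longrightarrow> VarInv v \<in> loc_ring Y Cs"
  by (auto simp: loc_ring_iff_keys VarInv_def loc_exponents_def lookup_single when_def)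

lemma loc_ring_sum: "(\<And>i. i \<in> I \<Longrightarrow> g i \<in> loc_ring Y Cs) \<Longrightarrow> (\<Sum>i\<in>I. g i) \<in> loc_ring Y Cs"
  by (induction I rule: infinite_finite_induct) (auto intro: loc_ring_add loc_ring_zero)

lemma loc_ring_prod: "(\<And>i. i \<in> I \<Longrightarrow> g i \<in> loc_ring Y Cs) \<Longrightarrow> (\<Prod>i\<in>I. g i) \<in> loc_ring Y Cs"
  by (induction I rule: infinite_finite_induct) (auto intro: loc_ring_mult loc_ring_one)

lemma loc_ring_power: "p \<in> loc_ring Y Cs \<Longrightarrow> p ^ n \<in> loc_ring Y Cs"
  by (induction n) (auto intro: loc_ring_mult loc_ring_one)

lemma loc_ring_subset_UNIV: "loc_ring Y Cs \<subseteq> loc_ring UNIV Cs"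
  by (auto simp: loc_ring_def)

section \<open>Substitution homomorphisms\<close>

definition subst_var_power ::
    "(nat \<times> nat \<Rightarrow> 'k::comm_ring_1 laurent) \<Rightarrow> nat \<times> nat \<Rightarrow> int \<Rightarrow> 'k laurent" where
  "subst_var_power f v k = (if k \<ge> 0 then f v ^ nat k else VarInv v ^ nat (- k))"

definition subst_monomial ::
    "(nat \<times> nat \<Rightarrow> 'k::comm_ring_1 laurent) \<Rightarrow> ((nat \<times> nat) \<Rightarrow>\<^sub>0 int) \<Rightarrow> 'k laurent" where
  "subst_monomial f e = (\<Prod>v\<in>Poly_Mapping.keys e. subst_var_power f v (Poly_Mapping.lookup e v))"

definition fixes_on :: "(nat \<times> nat) set \<Rightarrow> (nat \<times> nat \<Rightarrow> 'k::comm_ring_1 laurent) \<Rightarrow> bool" where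
  "fixes_on Cs f \<longleftrightarrow> (\<forall>v\<in>Cs. f v = Var v)"

lemma subst_eq_sum_monomials:
  "subst f p = (\<Sum>e\<in>Poly_Mapping.keys p. const (Poly_Mapping.lookup p e) * subst_monomial f e)"
  by (simp add: subst_def subst_monomial_def subst_var_power_def)

lemma subst_var_power_0 [simp]: "subst_var_power f v 0 = 1"
  by (simp add: subst_var_power_def)

lemma subst_monomial_0 [simp]: "subst_monomial f 0 = 1"
  by (simp add: subst_monomial_def)

lemma subst_monomial_superset:
  "finite K \<Longrightarrow> Poly_Mapping.keys e \<subseteq> K \<Longrightarrow>
    subst_monomial f e = (\<Prod>v\<in>K. subst_var_power f v (Poly_Mapping.lookup e v))"
  unfolding subst_monomial_def by (rule prod.mono_neutral_left) (auto simp: in_keys_iff)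

lemma subst_superset:
  "finite K \<Longrightarrow> Poly_Mapping.keys p \<subseteq> K \<Longrightarrow>
    subst f p = (\<Sum>e\<in>K. const (Poly_Mapping.lookup p e) * subst_monomial f e)"
  unfolding subst_eq_sum_monomials by (rule sum.mono_neutral_left) (auto simp: in_keys_iff)

lemma subst_single: "subst f (Poly_Mapping.single e c) = const c * subst_monomial f e"
  by (subst subst_superset[of "{e}"]) auto

lemma subst_add: "subst f (p + q) = subst f p + subst f q"
proof -
  let ?K = "Poly_Mapping.keys p \<union> Poly_Mapping.keys q"
  have "subst f (p + q) = (\<Sum>e\<in>?K. const (Poly_Mapping.lookup (p + q) e) * subst_monomial f e)"
    using keys_add[of p q] by (intro subst_superset) auto
  also have "\<dots> = subst f p + subst f q"
    by (simp add: lookup_add const_add distrib_right sum.distrib subst_superset[of ?K])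
  finally show ?thesis .
qed

lemma subst_0 [simp]: "subst f 0 = 0"
  by (simp add: subst_def)

lemma subst_sum: "subst f (\<Sum>i\<in>I. g i) = (\<Sum>i\<in>I. subst f (g i))"
  by (induction I rule: infinite_finite_induct) (simp_all add: subst_add)

lemma subst_const: "subst f (const c) = const c"
  unfolding const_def by (simp add: subst_single const_def)

lemma subst_one: "subst f 1 = 1"
  using subst_const[of f 1] by simp

lemma subst_Var: "subst f (Var v) = f v"
  by (simp add: Var_def subst_single subst_monomial_def subst_var_power_def)

lemma subst_VarInv: "subst f (VarInv v) = VarInv v"
  by (simp add: VarInv_def subst_single subst_monomial_def subst_var_power_def)

lemma mult_eq_sum_single:
  fixes p q :: "'k::comm_ring_1 laurent"
  shows "p * q = (\<Sum>a\<in>Poly_Mapping.keys p. \<Sum>b\<in>Poly_Mapping.keys q.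
    Poly_Mapping.single (a + b) (Poly_Mapping.lookup p a * Poly_Mapping.lookup q b))"
  by (subst (1 2) poly_mapping_sum_single_lookup[symmetric]) (simp add: sum_product mult_single)

lemma subst_var_power_fixed:
  "f v = Var v \<Longrightarrow> subst_var_power f v k = Poly_Mapping.single (Poly_Mapping.single v k) 1"
  by (simp add: subst_var_power_def Var_power VarInv_power)

lemma subst_var_power_add:
  assumes "(0 \<le> x \<and> 0 \<le> y) \<or> f v = Var v"
  shows "subst_var_power f v (x + y) = subst_var_power f v x * subst_var_power f v y"
  using assms
proof
  assume "0 \<le> x \<and> 0 \<le> y"
  then show ?thesis by (simp add: subst_var_power_def nat_add_distrib power_add)
next
  assume "f v = Var v"
  then show ?thesis by (simp add: subst_var_power_fixed mult_single single_add)
qed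

lemma subst_monomial_add:
  assumes f: "fixes_on Cs f" and "a \<in> loc_exponents UNIV Cs" and "b \<in> loc_exponents UNIV Cs"
  shows "subst_monomial f (a + b) = subst_monomial f a * subst_monomial f b"
proof -
  let ?K = "Poly_Mapping.keys a \<union> Poly_Mapping.keys b"
  have split: "subst_var_power f v (Poly_Mapping.lookup (a + b) v)
      = subst_var_power f v (Poly_Mapping.lookup a v) * subst_var_power f v (Poly_Mapping.lookup b v)" for v
  proof -
    have "(0 \<le> Poly_Mapping.lookup a v \<and> 0 \<le> Poly_Mapping.lookup b v) \<or> f v = Var v"
      using assms unfolding fixes_on_def loc_exponents_def by (metis (mono_tags) mem_Collect_eq not_le)
    then show ?thesis by (simp add: lookup_add subst_var_power_add)
  qed
  have "subst_monomial f (a + b) = (\<Prod>v\<in>?K. subst_var_power f v (Poly_Mapping.lookup (a + b) v))"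
    using keys_add[of a b] by (intro subst_monomial_superset) auto
  also have "\<dots> = subst_monomial f a * subst_monomial f b"
    by (simp add: split prod.distrib subst_monomial_superset[of ?K])
  finally show ?thesis .
qed

lemma subst_mult:
  assumes f: "fixes_on Cs f" and p: "p \<in> loc_ring UNIV Cs" and q: "q \<in> loc_ring UNIV Cs"
  shows "subst f (p * q) = subst f p * subst f q"
proof -
  have monomial_add: "subst_monomial f (a + b) = subst_monomial f a * subst_monomial f b"
    if "a \<in> Poly_Mapping.keys p" and "b \<in> Poly_Mapping.keys q" for a b
    using that p q by (intro subst_monomial_add[OF f]) (auto simp: loc_ring_iff_keys)
  have "subst f (p * q) = (\<Sum>a\<in>Poly_Mapping.keys p. \<Sum>b\<in>Poly_Mapping.keys q.
      const (Poly_Mapping.lookup p a * Poly_Mapping.lookup q b) * subst_monomial f (a + b))"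
    by (subst mult_eq_sum_single) (simp add: subst_sum subst_single)
  also have "\<dots> = (\<Sum>a\<in>Poly_Mapping.keys p. \<Sum>b\<in>Poly_Mapping.keys q.
      (const (Poly_Mapping.lookup p a) * subst_monomial f a) * (const (Poly_Mapping.lookup q b) * subst_monomial f b))"
    by (intro sum.cong refl) (simp add: monomial_add const_mult mult_ac)
  also have "\<dots> = subst f p * subst f q"
    by (simp add: subst_eq_sum_monomials sum_product)
  finally show ?thesis .
qed

lemma subst_var_power_in_loc_ring:
  fixes f :: "nat \<times> nat \<Rightarrow> 'k::comm_ring_1 laurent"
  assumes "f v \<in> loc_ring Y Cs" and "k < 0 \<Longrightarrow> v \<in> Y \<and> v \<in> Cs"
  shows "subst_var_power f v k \<in> loc_ring Y Cs"
proof (cases "0 \<le> k")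
  case True
  with assms(1) show ?thesis
    unfolding subst_var_power_def by (simp add: loc_ring_power)
next
  case False
  then have "k < 0" by simp
  with assms(2) have "(VarInv v :: 'k laurent) \<in> loc_ring Y Cs"
    by (simp add: loc_ring_VarInv)
  moreover have "subst_var_power f v k = VarInv v ^ nat (- k)"
    using False by (simp add: subst_var_power_def)
  ultimately show ?thesis
    by (simp only: loc_ring_power)
qed

lemma subst_monomial_in_loc_ring:
  assumes e: "e \<in> loc_exponents Y Cs" and "Cs \<subseteq> Y" and f: "\<And>v. v \<in> Y \<Longrightarrow> f v \<in> loc_ring Y Cs"
  shows "subst_monomial f e \<in> loc_ring Y Cs"
  unfolding subst_monomial_def
proof (rule loc_ring_prod, rule subst_var_power_in_loc_ring)
  fix v assume "v \<in> Poly_Mapping.keys e"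
  then show "f v \<in> loc_ring Y Cs"
    by (intro f loc_exponentsD(1)[OF e])
next
  fix v assume "Poly_Mapping.lookup e v < 0"
  with e \<open>Cs \<subseteq> Y\<close> show "v \<in> Y \<and> v \<in> Cs"
    using loc_exponentsD(2) by blast
qed

lemma subst_in_loc_ring:
  assumes p: "p \<in> loc_ring Y Cs" and "Cs \<subseteq> Y" and f: "\<And>v. v \<in> Y \<Longrightarrow> f v \<in> loc_ring Y Cs"
  shows "subst f p \<in> loc_ring Y Cs"
  unfolding subst_eq_sum_monomials
  using p by (intro loc_ring_sum loc_ring_mult loc_ring_const subst_monomial_in_loc_ring[OF _ \<open>Cs \<subseteq> Y\<close> f])
    (auto simp: loc_ring_iff_keys)

lemma subst_prod:
  assumes f: "fixes_on Cs f" and g: "\<And>i. i \<in> I \<Longrightarrow> g i \<in> loc_ring UNIV Cs"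
  shows "subst f (\<Prod>i\<in>I. g i) = (\<Prod>i\<in>I. subst f (g i))"
  using g
proof (induction I rule: infinite_finite_induct)
  case (insert x F)
  have "subst f (g x * prod g F) = subst f (g x) * subst f (prod g F)"
    using insert.prems by (intro subst_mult[OF f] loc_ring_prod) auto
  with insert show ?case by simp
qed (simp_all add: subst_one)

lemma subst_power:
  "fixes_on Cs f \<Longrightarrow> g \<in> loc_ring UNIV Cs \<Longrightarrow> subst f (g ^ n) = subst f g ^ n"
  using subst_prod[of Cs f "{..<n}" "\<lambda>_. g"] by simp

lemma subst_k_alg_hom:
  fixes f :: "nat \<times> nat \<Rightarrow> 'k::comm_ring_1 laurent"
  assumes f: "fixes_on Cs f"
  shows "is_k_alg_hom_on (loc_ring Y Cs) (subst f)"
  unfolding is_k_alg_hom_on_def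
proof (intro conjI ballI allI)
  fix x y :: "'k laurent" assume "x \<in> loc_ring Y Cs" and "y \<in> loc_ring Y Cs"
  then have x: "x \<in> loc_ring UNIV Cs" and y: "y \<in> loc_ring UNIV Cs"
    using loc_ring_subset_UNIV by blast+
  show "subst f (x * y) = subst f x * subst f y"
    using x y by (rule subst_mult[OF f])
  show "subst f (const c * x) = const c * subst f x" for c
    using subst_mult[OF f loc_ring_const x] by (simp add: subst_const)
qed (simp_all add: subst_one subst_add)

lemma subst_subst_var_power:
  assumes f: "fixes_on Cs f" and "g v \<in> loc_ring UNIV Cs" and "k < 0 \<Longrightarrow> v \<in> Cs"
  shows "subst f (subst_var_power g v k) = subst_var_power (\<lambda>v. subst f (g v)) v k"
  using assms by (simp add: subst_var_power_def subst_power subst_VarInv loc_ring_VarInv)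

lemma subst_subst_monomial:
  assumes f: "fixes_on Cs f" and g: "\<And>v. g v \<in> loc_ring UNIV Cs" and e: "e \<in> loc_exponents UNIV Cs"
  shows "subst f (subst_monomial g e) = subst_monomial (\<lambda>v. subst f (g v)) e"
proof -
  have neg: "Poly_Mapping.lookup e v < 0 \<Longrightarrow> v \<in> Cs" for v
    using e by (rule loc_exponentsD)
  have "subst f (subst_monomial g e)
      = (\<Prod>v\<in>Poly_Mapping.keys e. subst f (subst_var_power g v (Poly_Mapping.lookup e v)))"
    unfolding subst_monomial_def using neg g by (intro subst_prod[OF f] subst_var_power_in_loc_ring) auto
  also have "\<dots> = subst_monomial (\<lambda>v. subst f (g v)) e"
    unfolding subst_monomial_def using neg by (intro prod.cong refl subst_subst_var_power[OF f g])
  finally show ?thesis .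
qed

lemma subst_subst:
  assumes f: "fixes_on Cs f" and g: "\<And>v. g v \<in> loc_ring UNIV Cs" and p: "p \<in> loc_ring UNIV Cs"
  shows "subst f (subst g p) = subst (\<lambda>v. subst f (g v)) p"
proof -
  have monomial_term: "subst f (const c * subst_monomial g e) = const c * subst_monomial (\<lambda>v. subst f (g v)) e"
    if "e \<in> Poly_Mapping.keys p" for c e
  proof -
    have e: "e \<in> loc_exponents UNIV Cs"
      using p that by (auto simp: loc_ring_iff_keys)
    then have "subst_monomial g e \<in> loc_ring UNIV Cs"
      using g by (intro subst_monomial_in_loc_ring) auto
    then show ?thesis
      by (simp add: subst_mult[OF f loc_ring_const] subst_const subst_subst_monomial[OF f g e])
  qed
  have "subst f (subst g p)
      = (\<Sum>e\<in>Poly_Mapping.keys p. subst f (const (Poly_Mapping.lookup p e) * subst_monomial g e))"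
    by (simp only: subst_eq_sum_monomials[of g] subst_sum)
  also have "\<dots> = (\<Sum>e\<in>Poly_Mapping.keys p.
      const (Poly_Mapping.lookup p e) * subst_monomial (\<lambda>v. subst f (g v)) e)"
    by (intro sum.cong refl monomial_term)
  also have "\<dots> = subst (\<lambda>v. subst f (g v)) p"
    by (rule subst_eq_sum_monomials[symmetric])
  finally show ?thesis .
qed

lemma subst_Var_eq_id: "subst Var p = (p :: 'k::comm_ring_1 laurent)"
proof -
  have "subst_monomial (Var :: _ \<Rightarrow> 'k laurent) e = Poly_Mapping.single e 1" for e
  proof -
    have "subst_monomial Var e
        = (\<Prod>v\<in>Poly_Mapping.keys e. Poly_Mapping.single (Poly_Mapping.single v (Poly_Mapping.lookup e v)) 1)"
      by (simp add: subst_monomial_def subst_var_power_fixed)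
    also have "\<dots> = Poly_Mapping.single e 1"
      by (simp add: prod_single_one poly_mapping_sum_single_lookup)
    finally show ?thesis .
  qed
  then have "subst Var p = (\<Sum>e\<in>Poly_Mapping.keys p. Poly_Mapping.single e (Poly_Mapping.lookup p e))"
    by (simp add: subst_eq_sum_monomials const_def mult_single)
  then show ?thesis
    by (simp add: poly_mapping_sum_single_lookup)
qed

section \<open>Sums over subsets split at an extreme element\<close>

lemma sum_Pow_split_unique:
  assumes U: "finite U"
    and V: "\<And>u. u \<in> U \<Longrightarrow> V u \<subseteq> U" "\<And>u. u \<notin> V u"
    and unique: "\<And>A. A \<subseteq> U \<Longrightarrow> A \<noteq> {} \<Longrightarrow> \<exists>!u. u \<in> A \<and> A - {u} \<subseteq> V u"
  shows "(\<Sum>A\<in>Pow U. F A) = F {} + (\<Sum>u\<in>U. \<Sum>B\<in>Pow (V u). F (insert u B))"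
proof -
  let ?D = "\<lambda>u. insert u ` Pow (V u)"
  have finite_D: "finite (?D u)" if "u \<in> U" for u
    using V(1)[OF that] U by (auto intro: finite_subset)
  have Pow_eq: "Pow U = insert {} (\<Union>u\<in>U. ?D u)"
  proof (intro equalityI subsetI)
    fix A assume A: "A \<in> Pow U"
    show "A \<in> insert {} (\<Union>u\<in>U. ?D u)"
    proof (cases "A = {}")
      case False
      then obtain u where u: "u \<in> A" "A - {u} \<subseteq> V u"
        using unique[of A] A by auto
      then have "A \<in> ?D u"
        by (intro image_eqI[of _ _ "A - {u}"]) auto
      with u A show ?thesis by blast
    qed simp
  qed (use V in auto)
  have disjoint: "?D u \<inter> ?D u' = {}" if "u \<in> U" "u' \<in> U" "u \<noteq> u'" for u u'
  proof -
    have "u = u'" if "A \<in> ?D u" "A \<in> ?D u'" for A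
    proof -
      have "A \<subseteq> U" "A \<noteq> {}" "u \<in> A \<and> A - {u} \<subseteq> V u" "u' \<in> A \<and> A - {u'} \<subseteq> V u'"
        using that V(2) V(1)[OF \<open>u \<in> U\<close>] \<open>u \<in> U\<close> by auto
      then show ?thesis
        using unique[of A] by blast
    qed
    with \<open>u \<noteq> u'\<close> show ?thesis by blast
  qed
  have "(\<Sum>A\<in>Pow U. F A) = F {} + (\<Sum>A\<in>(\<Union>u\<in>U. ?D u). F A)"
    unfolding Pow_eq using U finite_D by (subst sum.insert) auto
  also have "(\<Sum>A\<in>(\<Union>u\<in>U. ?D u). F A) = (\<Sum>u\<in>U. \<Sum>A\<in>?D u. F A)"
    using U finite_D disjoint by (subst sum.UNION_disjoint) auto
  also have "\<dots> = (\<Sum>u\<in>U. \<Sum>B\<in>Pow (V u). F (insert u B))"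
  proof -
    have "inj_on (insert u) (Pow (V u))" for u
      using V(2)[of u] by (intro inj_onI) (metis Pow_iff insert_ident subsetD)
    then show ?thesis by (simp add: sum.reindex)
  qed
  finally show ?thesis .
qed

lemma sum_Pow_split_Min:
  fixes U :: "'a::linorder set"
  assumes "finite U"
  shows "(\<Sum>A\<in>Pow U. F A) = F {} + (\<Sum>u\<in>U. \<Sum>B\<in>Pow {w\<in>U. u < w}. F (insert u B))"
proof (rule sum_Pow_split_unique[OF assms])
  fix A assume "A \<subseteq> U" "A \<noteq> {}"
  with assms have "finite A" by (auto intro: finite_subset)
  show "\<exists>!u. u \<in> A \<and> A - {u} \<subseteq> {w\<in>U. u < w}"
  proof
    show "Min A \<in> A \<and> A - {Min A} \<subseteq> {w\<in>U. Min A < w}"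
      using \<open>finite A\<close> \<open>A \<noteq> {}\<close> \<open>A \<subseteq> U\<close> by (auto simp: order.not_eq_order_implies_strict)
  next
    fix u assume "u \<in> A \<and> A - {u} \<subseteq> {w\<in>U. u < w}"
    with \<open>finite A\<close> show "u = Min A"
      by (intro Min_eqI[symmetric]) (auto simp: less_imp_le)
  qed
qed auto

lemma sum_Pow_split_Max:
  fixes U :: "'a::linorder set"
  assumes "finite U"
  shows "(\<Sum>A\<in>Pow U. F A) = F {} + (\<Sum>u\<in>U. \<Sum>B\<in>Pow {w\<in>U. w < u}. F (insert u B))"
proof (rule sum_Pow_split_unique[OF assms])
  fix A assume "A \<subseteq> U" "A \<noteq> {}"
  with assms have "finite A" by (auto intro: finite_subset)
  show "\<exists>!u. u \<in> A \<and> A - {u} \<subseteq> {w\<in>U. w < u}"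
  proof
    show "Max A \<in> A \<and> A - {Max A} \<subseteq> {w\<in>U. w < Max A}"
      using \<open>finite A\<close> \<open>A \<noteq> {}\<close> \<open>A \<subseteq> U\<close> by (auto simp: order.not_eq_order_implies_strict)
  next
    fix u assume "u \<in> A \<and> A - {u} \<subseteq> {w\<in>U. w < u}"
    with \<open>finite A\<close> show "u = Max A"
      by (intro Max_eqI[symmetric]) (auto simp: less_imp_le)
  qed
qed auto

lemma sorted_list_of_set_insert_less:
  assumes "finite B" and "\<forall>w\<in>B. u < w"
  shows "sorted_list_of_set (insert u B) = u # sorted_list_of_set B"
proof -
  have "u \<notin> B" using assms(2) by blast
  with assms show ?thesis
    by (subst sorted_list_of_set_unique[symmetric]) (auto simp: strict_sorted_list_of_set)
qed

lemma sorted_list_of_set_insert_greater: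
  assumes "finite B" and "\<forall>w\<in>B. w < u"
  shows "sorted_list_of_set (insert u B) = sorted_list_of_set B @ [u]"
proof -
  have "u \<notin> B" using assms(2) by blast
  with assms show ?thesis
    by (subst sorted_list_of_set_unique[symmetric]) (auto simp: strict_sorted_list_of_set sorted_wrt_append)
qed

section \<open>Chain sums and the images of the variables\<close>

definition chain_sum ::
    "'k::comm_ring_1 \<Rightarrow> (nat \<Rightarrow> nat \<times> nat) \<Rightarrow> nat \<Rightarrow> nat \<Rightarrow> nat set \<Rightarrow> 'k laurent" where
  "chain_sum s S i c U = (\<Sum>A\<in>Pow U. const (s ^ card A) * chain_term S i c (sorted_list_of_set A))"

lemma finite_U_set: "finite (U_set S h i j)"
  by (simp add: U_set_def)

lemma img_eq_chain_sum: "img s S h (i, j) = chain_sum s S i j (U_set S h i j)"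
  unfolding chain_sum_def img_def using finite_U_set
  by (subst sum.remove[of _ "{}"]) auto

lemma chain_term_append:
  "chain_term S i c (us @ [u]) = chain_term S (fst (S u)) c us * VarInv (S u) * Var (i, snd (S u))"
  by (induction us arbitrary: c) (simp_all add: mult.assoc)

lemma chain_sum_split_first:
  assumes "finite U"
  shows "chain_sum s S i c U = Var (i, c)
    + (\<Sum>u\<in>U. const s * Var (fst (S u), c) * VarInv (S u) * chain_sum s S i (snd (S u)) {w\<in>U. u < w})"
proof -
  have "const (s ^ card (insert u B)) * chain_term S i c (sorted_list_of_set (insert u B))
      = const s * Var (fst (S u), c) * VarInv (S u) * (const (s ^ card B) * chain_term S i (snd (S u)) (sorted_list_of_set B))"
    if "B \<subseteq> {w\<in>U. u < w}" for u B
  proof -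
    have "finite B" "u \<notin> B" "\<forall>w\<in>B. u < w"
      using that assms by (auto intro: finite_subset)
    then show ?thesis
      by (subst sorted_list_of_set_insert_less) (simp_all add: const_mult mult_ac)
  qed
  then show ?thesis
    unfolding chain_sum_def by (simp add: sum_Pow_split_Min[OF assms] sum_distrib_left)
qed

lemma chain_sum_split_last:
  assumes "finite U"
  shows "chain_sum s S i c U = Var (i, c)
    + (\<Sum>u\<in>U. const s * chain_sum s S (fst (S u)) c {w\<in>U. w < u} * VarInv (S u) * Var (i, snd (S u)))"
proof -
  have "const (s ^ card (insert u B)) * chain_term S i c (sorted_list_of_set (insert u B))
      = const s * (const (s ^ card B) * chain_term S (fst (S u)) c (sorted_list_of_set B)) * VarInv (S u) * Var (i, snd (S u))"
    if "B \<subseteq> {w\<in>U. w < u}" for u B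
  proof -
    have "finite B" "u \<notin> B" "\<forall>w\<in>B. w < u"
      using that assms by (auto intro: finite_subset)
    then show ?thesis
      by (subst sorted_list_of_set_insert_greater) (simp_all add: chain_term_append const_mult mult_ac)
  qed
  then show ?thesis
    unfolding chain_sum_def by (simp add: sum_Pow_split_Max[OF assms] sum_distrib_left sum_distrib_right)
qed

locale corner_chain =
  fixes S :: "nat \<Rightarrow> nat \<times> nat" and h :: nat
  assumes corner_step: "\<forall>w\<in>{1..h}. fst (S w) < fst (S (w+1)) \<and> snd (S w) > snd (S (w+1))"
begin

lemma corner_less:
  assumes "1 \<le> w" and "w < w'" and "w' \<le> h + 1"
  shows "fst (S w) < fst (S w') \<and> snd (S w') < snd (S w)"
proof -
  have "Suc w \<le> w'" using assms(2) by simp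
  then show ?thesis
    using assms(3)
  proof (induction w' rule: dec_induct)
    case base
    with assms(1) corner_step show ?case by simp
  next
    case (step n)
    with assms(1) corner_step have "fst (S n) < fst (S (Suc n)) \<and> snd (S (Suc n)) < snd (S n)"
      by simp
    with step show ?case by auto
  qed
qed

lemma fst_corner_less_iff:
  "w \<in> {1..h+1} \<Longrightarrow> w' \<in> {1..h+1} \<Longrightarrow> fst (S w) < fst (S w') \<longleftrightarrow> w < w'"
  using corner_less[of w w'] corner_less[of w' w] by (cases w w' rule: linorder_cases) auto

lemma snd_corner_less_iff:
  "w \<in> {1..h+1} \<Longrightarrow> w' \<in> {1..h+1} \<Longrightarrow> snd (S w') < snd (S w) \<longleftrightarrow> w < w'"
  using corner_less[of w w'] corner_less[of w' w] by (cases w w' rule: linorder_cases) auto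

lemma U_set_corner: "w \<in> {1..h+1} \<Longrightarrow> U_set S h (fst (S w)) (snd (S w)) = {}"
  unfolding U_set_def using fst_corner_less_iff snd_corner_less_iff by fastforce

lemma U_set_snd_corner:
  "u \<in> U_set S h i j \<Longrightarrow> U_set S h i (snd (S u)) = {w \<in> U_set S h i j. u < w}"
  unfolding U_set_def using snd_corner_less_iff[of u] by (auto 0 3 intro: less_trans)

lemma U_set_fst_corner:
  "u \<in> U_set S h i j \<Longrightarrow> U_set S h (fst (S u)) j = {w \<in> U_set S h i j. w < u}"
  unfolding U_set_def using fst_corner_less_iff[of _ u] by (auto 0 3 intro: less_trans)

lemma img_split_first: "img s S h (i, j) = Var (i, j)
    + (\<Sum>u\<in>U_set S h i j. const s * Var (fst (S u), j) * VarInv (S u) * img s S h (i, snd (S u)))"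
  by (simp add: img_eq_chain_sum chain_sum_split_first[OF finite_U_set] U_set_snd_corner)

lemma img_split_last: "img s S h (i, j) = Var (i, j)
    + (\<Sum>u\<in>U_set S h i j. const s * img s S h (fst (S u), j) * VarInv (S u) * Var (i, snd (S u)))"
  by (simp add: img_eq_chain_sum chain_sum_split_last[OF finite_U_set] U_set_fst_corner)

lemma img_fixes_corners: "fixes_on (S ` {1..h+1}) (img s S h)"
  unfolding fixes_on_def
proof
  fix v assume "v \<in> S ` {1..h+1}"
  then obtain w where w: "w \<in> {1..h+1}" "v = S w" by blast
  moreover obtain a b where "S w = (a, b)" by fastforce
  ultimately show "img s S h v = Var v"
    using U_set_corner[OF w(1)] by (simp add: img_def)
qed

lemma chain_term_in_loc_ring:
  assumes Y: "ladder_closed Y" and corners: "S ` {1..h+1} \<subseteq> Cs" "Cs \<subseteq> Y"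
  shows "(i, c) \<in> Y \<Longrightarrow> sorted_wrt (<) us
    \<Longrightarrow> \<forall>u\<in>set us. u \<in> {1..h+1} \<and> fst (S u) < i \<and> snd (S u) < c
    \<Longrightarrow> chain_term S i c us \<in> loc_ring Y Cs"
proof (induction us arbitrary: c)
  case Nil
  then show ?case by (simp add: loc_ring_Var)
next
  case (Cons u us)
  then have u: "u \<in> {1..h+1}" "fst (S u) < i" "snd (S u) < c" by auto
  with corners have "S u \<in> Cs" "S u \<in> Y" by blast+
  with Y \<open>(i, c) \<in> Y\<close> u have "(fst (S u), c) \<in> Y" "(i, snd (S u)) \<in> Y"
    unfolding ladder_closed_def by (metis less_imp_le prod.collapse)+
  moreover have "\<forall>w\<in>set us. w \<in> {1..h+1} \<and> fst (S w) < i \<and> snd (S w) < snd (S u)"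
    using Cons.prems(2,3) u(1) snd_corner_less_iff[of u] by auto
  ultimately show ?case
    using Cons.IH Cons.prems(2) \<open>S u \<in> Y\<close> \<open>S u \<in> Cs\<close>
    by (simp add: loc_ring_mult loc_ring_Var loc_ring_VarInv)
qed

lemma img_in_loc_ring:
  assumes Y: "ladder_closed Y" and corners: "S ` {1..h+1} \<subseteq> Cs" "Cs \<subseteq> Y" and "v \<in> Y"
  shows "img s S h v \<in> loc_ring Y Cs"
proof -
  obtain i j where v: "v = (i, j)" by fastforce
  have "chain_term S i j (sorted_list_of_set A) \<in> loc_ring Y Cs" if "A \<subseteq> U_set S h i j" for A
  proof -
    have "finite A" using that finite_U_set by (rule finite_subset)
    with that \<open>v \<in> Y\<close> v show ?thesis
      by (intro chain_term_in_loc_ring[OF assms(1-3)]) (auto simp: U_set_def)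
  qed
  with \<open>v \<in> Y\<close> show ?thesis
    unfolding v img_def
    by (auto intro!: loc_ring_add loc_ring_Var loc_ring_sum loc_ring_mult loc_ring_const)
qed

lemma img_in_loc_ring_UNIV: "img s S h v \<in> loc_ring UNIV (S ` {1..h+1})"
  by (rule img_in_loc_ring) (auto simp: ladder_closed_def)

lemma img_inverse_Var:
  fixes s :: "'k::comm_ring_1"
  shows "subst (img (- s) S h) (img s S h (i, j)) = Var (i, j)"
proof (induction i arbitrary: j rule: less_induct)
  case (less i)
  let ?f = "img (- s) S h"
  have fixes_f: "fixes_on (S ` {1..h+1}) ?f" by (rule img_fixes_corners)
  have summand: "subst ?f (const s * img s S h (fst (S u), j) * VarInv (S u) * Var (i, snd (S u)))
      = const s * Var (fst (S u), j) * VarInv (S u) * ?f (i, snd (S u))" if "u \<in> U_set S h i j" for u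
  proof -
    from that have "u \<in> {1..h+1}" "fst (S u) < i" by (auto simp: U_set_def)
    then have inv: "(VarInv (S u) :: 'k laurent) \<in> loc_ring UNIV (S ` {1..h+1})"
      by (simp add: loc_ring_VarInv)
    have img: "img s S h (fst (S u), j) \<in> loc_ring UNIV (S ` {1..h+1})"
      by (rule img_in_loc_ring_UNIV)
    have coeff_img: "const s * img s S h (fst (S u), j) \<in> loc_ring UNIV (S ` {1..h+1})"
      using loc_ring_const img by (rule loc_ring_mult)
    have "subst ?f (const s * img s S h (fst (S u), j) * VarInv (S u) * Var (i, snd (S u)))
        = subst ?f (const s) * subst ?f (img s S h (fst (S u), j))
          * subst ?f (VarInv (S u)) * subst ?f (Var (i, snd (S u)))"
      using subst_mult[OF fixes_f loc_ring_mult[OF coeff_img inv] loc_ring_Var[OF UNIV_I]]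
        subst_mult[OF fixes_f coeff_img inv] subst_mult[OF fixes_f loc_ring_const img]
      by simp
    also have "\<dots> = const s * Var (fst (S u), j) * VarInv (S u) * ?f (i, snd (S u))"
      using less.IH[OF \<open>fst (S u) < i\<close>] by (simp add: subst_const subst_VarInv subst_Var)
    finally show ?thesis .
  qed
  have "subst ?f (img s S h (i, j))
      = ?f (i, j) + (\<Sum>u\<in>U_set S h i j. const s * Var (fst (S u), j) * VarInv (S u) * ?f (i, snd (S u)))"
    by (subst img_split_last) (simp add: subst_add subst_sum subst_Var summand)
  also have "\<dots> = Var (i, j) + (\<Sum>u\<in>U_set S h i j.
      (const (- s) + const s) * (Var (fst (S u), j) * VarInv (S u) * ?f (i, snd (S u))))"
    by (subst img_split_first) (simp add: algebra_simps sum.distrib)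
  also have "\<dots> = Var (i, j)"
    by (simp flip: const_add)
  finally show ?case .
qed

lemma subst_img_inverse:
  assumes "p \<in> loc_ring UNIV (S ` {1..h+1})"
  shows "subst (img (- s) S h) (subst (img s S h) p) = p"
proof -
  have "(\<lambda>v. subst (img (- s) S h) (img s S h v)) = Var"
    using img_inverse_Var by fastforce
  then show ?thesis
    using subst_subst[OF img_fixes_corners img_in_loc_ring_UNIV assms] by (simp add: subst_Var_eq_id)
qed

end

theorem lemmaA13:
  fixes m n t h :: nat and Y :: "(nat \<times> nat) set" and S :: "nat \<Rightarrow> nat \<times> nat"
  assumes "is_ladder m n Y"
    and "t > 2"
    and "t_connected t Y"
    and "S ` {1..h+1} = lower_outside_corners Y"
    and "\<forall>w\<in>{1..h}. fst (S w) < fst (S (w+1)) \<and> snd (S w) > snd (S (w+1))"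
  defines "R \<equiv> (loc_ring Y (lower_outside_corners Y) :: 'k::field laurent set)"
  shows "psi S h ` R \<subseteq> R \<and> chi S h ` R \<subseteq> R
    \<and> is_k_alg_hom_on R (psi S h) \<and> is_k_alg_hom_on R (chi S h)
    \<and> (\<forall>p\<in>R. psi S h (chi S h p) = p \<and> chi S h (psi S h p) = p)"
proof -
  interpret corner_chain S h
    using assms(5) by unfold_locales
  have corners: "S ` {1..h+1} = lower_outside_corners Y"
    by (fact assms(4))
  have corners_in_Y: "lower_outside_corners Y \<subseteq> Y"
    by (auto simp: lower_outside_corners_def)
  have ladder: "ladder_closed Y"
    using assms(1) by (simp add: is_ladder_def)
  have closed: "subst (img s S h) p \<in> R" if "p \<in> R" for s :: 'k and p
    using that corners_in_Y unfolding R_def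
    by (intro subst_in_loc_ring img_in_loc_ring[OF ladder equalityD1[OF corners]])
  have hom: "is_k_alg_hom_on R (subst (img s S h))" for s :: 'k
    unfolding R_def by (rule subst_k_alg_hom[OF img_fixes_corners[unfolded corners]])
  have inverse: "subst (img (- s) S h) (subst (img s S h) p) = p" if "p \<in> R" for s :: 'k and p
    using that loc_ring_subset_UNIV unfolding R_def corners[symmetric]
    by (intro subst_img_inverse) blast
  show ?thesis
    unfolding psi_def chi_def using closed hom inverse[of _ 1] inverse[of _ "-1"] by auto
qed

end
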